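(* Let $U\subset\mathbb{R}^2$ be open, let $x:U\to\mathbb{R}^3$ be smooth and let $\xi:U\to S^2$ be a frontal. Let $\Omega$ be a tangent moving basis of $\xi$, let $D\xi=\Omega\Delta_\Omega^T$, and let $q\in U\setminus\Sigma(\xi)$. Then for every $b=(b_1,b_2)^T\in\mathbb{R}^2\setminus\{0\}$, setting $a^T=(a_1,a_2)=b^T\Delta_\Omega(q)^{-1}$ and $\delta_\Omega=\det\Delta_\Omega(q)$, one has $$\delta_\Omega\,\mathscr{K}_q(a_1,a_2)=\mathscr{K}_q^{\Omega}(b_1,b_2).$$
   Context: A smooth map $f:U\to\mathbb{R}^3$ is a frontal if locally there is a smooth unit vector field along $f$ orthogonal to $f_{u_1},f_{u_2}$; $\Sigma(f)=\{u\in U: f \text{ is not immersive at } u\}$. A tangent moving basis of $\xi$ is a smooth $\Omega=(w_1\ w_2):U\to M_{3\times2}(\mathbb{R})$ with linearly independent columns such that $\xi_{u_1},\xi_{u_2}\in\mathrm{span}(w_1,w_2)$; then $D\xi=\Omega\Delta_\Omega^T$ for a unique smooth $2\times 2$ matrix valued $\Delta_\Omega$, and $\Sigma(\xi)=(\det\Delta_\Omega)^{-1}(0)$. Kummer matrices: $\boldsymbol{\mathcal{I}}=D\xi^TD\xi$, $\boldsymbol{\mathcal{II}}=-D\xi^TDx$; $\Omega$-Kummer matrices: $\boldsymbol{\mathcal{I}}_\Omega=\Omega^T\Omega$, $\boldsymbol{\mathcal{II}}_\Omega=-\Omega^TDx$. For $q\notin\Sigma(\xi)$ and $a\in\mathbb{R}^2\setminus\{0\}$,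 $\mathscr{K}_q(a)=\dfrac{a^T\boldsymbol{\mathcal{II}}(q)a}{a^T\boldsymbol{\mathcal{I}}(q)a}$. The $\Omega$-Kummer curvature function is $\mathscr{K}_q^\Omega(b)=\dfrac{b^T\boldsymbol{\mathcal{II}}_\Omega(q)\,\mathrm{adj}(\Delta_\Omega(q)^T)\,b}{b^T\boldsymbol{\mathcal{I}}_\Omega(q)b}$ for $b\in\mathbb{R}^2\setminus\{0\}$, where $\mathrm{adj}$ is the adjugate matrix. *)

theory Defs
  imports "HOL-Analysis.Analysis"
begin

definition partial_deriv :: "(real^2 \<Rightarrow> 'b::real_normed_vector) \<Rightarrow> 2 \<Rightarrow> real^2 \<Rightarrow> 'b" where
  "partial_deriv f i u = frechet_derivative f (at u) (axis i 1)"

fun Ck_on :: "nat \<Rightarrow> (real^2) set \<Rightarrow> (real^2 \<Rightarrow> 'b::real_normed_vector) \<Rightarrow> bool" where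
  "Ck_on 0 U f = continuous_on U f"
| "Ck_on (Suc k) U f = (continuous_on U f \<and> f differentiable_on U \<and>
      (\<forall>i. Ck_on k U (partial_deriv f i)))"

definition smooth_on :: "(real^2) set \<Rightarrow> (real^2 \<Rightarrow> 'b::real_normed_vector) \<Rightarrow> bool" where
  "smooth_on U f \<longleftrightarrow> (\<forall>k. Ck_on k U f)"

abbreviation Dmat :: "(real^2 \<Rightarrow> real^3) \<Rightarrow> real^2 \<Rightarrow> real^2^3" where
  "Dmat f u \<equiv> jacobian f (at u)"

definition frontal :: "(real^2) set \<Rightarrow> (real^2 \<Rightarrow> real^3) \<Rightarrow> bool" where
  "frontal U f \<longleftrightarrow> smooth_on U f \<and>
     (\<forall>p\<in>U. \<exists>V \<nu>. open V \<and> p \<in> V \<and> V \<subseteq> U \<and> smooth_on V (\<nu> :: real^2 \<Rightarrow> real^3) \<and>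
        (\<forall>u\<in>V. norm (\<nu> u) = 1 \<and> (\<forall>i. \<nu> u \<bullet> column i (Dmat f u) = 0)))"

definition Sigma_set :: "(real^2) set \<Rightarrow> (real^2 \<Rightarrow> real^3) \<Rightarrow> (real^2) set" where
  "Sigma_set U f = {u \<in> U. \<not> inj ((*v) (Dmat f u))}"

definition tangent_moving_basis :: "(real^2) set \<Rightarrow> (real^2 \<Rightarrow> real^3) \<Rightarrow> (real^2 \<Rightarrow> real^2^3) \<Rightarrow> bool" where
  "tangent_moving_basis U f \<Omega> \<longleftrightarrow> smooth_on U \<Omega> \<and>
     (\<forall>u\<in>U. (\<forall>c1 c2. c1 *\<^sub>R column 1 (\<Omega> u) + c2 *\<^sub>R column 2 (\<Omega> u) = 0 \<longrightarrow> c1 = 0 \<and> c2 = 0) \<and>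
        (\<forall>i. column i (Dmat f u) \<in> span {column 1 (\<Omega> u), column 2 (\<Omega> u)}))"

text \<open>Adjugate: adj(M)_{ij} = cofactor C_{ji} = det of M with row j replaced by e_i.\<close>
definition adjugate :: "real^'n^'n \<Rightarrow> real^'n^'n" where
  "adjugate M = (\<chi> i j. det (\<chi> k. if k = j then axis i 1 else M $ k))"

definition kummer_I :: "(real^2 \<Rightarrow> real^3) \<Rightarrow> real^2 \<Rightarrow> real^2^2" where
  "kummer_I \<xi> q = transpose (Dmat \<xi> q) ** Dmat \<xi> q"

definition kummer_II :: "(real^2 \<Rightarrow> real^3) \<Rightarrow> (real^2 \<Rightarrow> real^3) \<Rightarrow> real^2 \<Rightarrow> real^2^2" where
  "kummer_II x \<xi> q = - (transpose (Dmat \<xi> q) ** Dmat x q)"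

definition kummer_I_Omega :: "(real^2 \<Rightarrow> real^2^3) \<Rightarrow> real^2 \<Rightarrow> real^2^2" where
  "kummer_I_Omega \<Omega> q = transpose (\<Omega> q) ** \<Omega> q"

definition kummer_II_Omega :: "(real^2 \<Rightarrow> real^3) \<Rightarrow> (real^2 \<Rightarrow> real^2^3) \<Rightarrow> real^2 \<Rightarrow> real^2^2" where
  "kummer_II_Omega x \<Omega> q = - (transpose (\<Omega> q) ** Dmat x q)"

definition kummer_curv :: "(real^2 \<Rightarrow> real^3) \<Rightarrow> (real^2 \<Rightarrow> real^3) \<Rightarrow> real^2 \<Rightarrow> real^2 \<Rightarrow> real" where
  "kummer_curv x \<xi> q a = (a \<bullet> (kummer_II x \<xi> q *v a)) / (a \<bullet> (kummer_I \<xi> q *v a))"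

definition kummer_curv_Omega :: "(real^2 \<Rightarrow> real^3) \<Rightarrow> (real^2 \<Rightarrow> real^2^3) \<Rightarrow> (real^2 \<Rightarrow> real^2^2)
    \<Rightarrow> real^2 \<Rightarrow> real^2 \<Rightarrow> real" where
  "kummer_curv_Omega x \<Omega> \<Delta> q b =
     (b \<bullet> ((kummer_II_Omega x \<Omega> q ** adjugate (transpose (\<Delta> q))) *v b)) / (b \<bullet> (kummer_I_Omega \<Omega> q *v b))"

end

theory Submission
  imports Defs
begin

(* The identity is pointwise linear algebra at q. Since q is a regular point of \<xi>,
   the factorisation D\<xi> = \<Omega> \<Delta>\<^sup>T forces \<Delta>(q) to be invertible, and the vector a
   with \<Delta>(q)\<^sup>T a = b satisfies D\<xi>(q) a = \<Omega>(q) b, so both denominators equal |\<Omega>(q) b|\<^sup>2.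
   In the numerators, adj(\<Delta>(q)\<^sup>T) b = det \<Delta>(q) a produces the factor det \<Delta>(q). *)

lemma matrix_mul_matrix_inv:
  fixes A :: "'a::semiring_1^'n^'m"
  assumes "invertible A"
  shows "A ** matrix_inv A = mat 1"
  using someI_ex[OF assms[unfolded invertible_def]] unfolding matrix_inv_def by blast

lemma matrix_inv_mul_matrix:
  fixes A :: "'a::semiring_1^'n^'m"
  assumes "invertible A"
  shows "matrix_inv A ** A = mat 1"
  using someI_ex[OF assms[unfolded invertible_def]] unfolding matrix_inv_def by blast

lemma matrix_vector_mult_uminus_left:
  fixes A :: "'a::comm_ring_1^'n^'m"
  shows "(- A) *v v = - (A *v v)"
  by (simp add: vec_eq_iff matrix_vector_mult_def sum_negf)

lemma matrix_mul_uminus_left: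
  fixes A :: "'a::comm_ring_1^'n^'m"
  shows "(- A) ** B = - (A ** B)"
  by (simp add: vec_eq_iff matrix_matrix_mult_def sum_negf)

lemma inner_transpose_matrix_mul:
  fixes v :: "real^'n"
  shows "v \<bullet> ((transpose A ** B) *v w) = (A *v v) \<bullet> (B *v w)"
proof -
  have "v \<bullet> ((transpose A ** B) *v w) = v \<bullet> (transpose A *v (B *v w))"
    by (simp only: matrix_vector_mul_assoc)
  also have "\<dots> = (v v* transpose A) \<bullet> (B *v w)"
    by (rule dot_lmul_matrix[symmetric])
  finally show ?thesis
    by (simp only: vector_transpose_matrix)
qed

lemma invertible_if_inj_matrix_mul:
  fixes A :: "'a::field^'n^'m" and B :: "'a^'n^'n"
  assumes "inj ((*v) (A ** B))"
  shows "invertible B"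
proof -
  have "\<forall>v. B *v v = 0 \<longrightarrow> v = 0"
    using assms by (metis injD matrix_vector_mul_assoc matrix_vector_mult_0_right)
  then have "\<exists>B'. B' ** B = mat 1"
    using matrix_left_invertible_ker by blast
  then show ?thesis
    using invertible_left_inverse by blast
qed

lemma matrix_mul_adjugate_2:
  fixes A :: "real^2^2"
  shows "A ** adjugate A = det A *\<^sub>R mat 1"
  by (simp add: vec_eq_iff forall_2 matrix_matrix_mult_def sum_2 det_2 adjugate_def
      mat_def axis_def algebra_simps)

lemma adjugate_transpose_2:
  fixes M :: "real^2^2"
  assumes "invertible M"
  shows "adjugate (transpose M) = det M *\<^sub>R transpose (matrix_inv M)"
proof -
  have inv_T: "transpose (matrix_inv M) ** transpose M = mat 1"
    by (metis assms matrix_mul_matrix_inv matrix_transpose_mul transpose_mat)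
  have "adjugate (transpose M) = transpose (matrix_inv M) ** (transpose M ** adjugate (transpose M))"
    by (simp add: matrix_mul_assoc inv_T)
  also have "\<dots> = det M *\<^sub>R transpose (matrix_inv M)"
    by (simp add: matrix_mul_adjugate_2 det_transpose matrix_scalar_ac)
  finally show ?thesis .
qed

lemma kummer_quotients_change_of_frame:
  fixes W X :: "real^2^'m" and M :: "real^2^2" and b :: "real^2"
  assumes "invertible M"
  defines "a \<equiv> b v* matrix_inv M"
  shows "det M * ((a \<bullet> ((- (transpose (W ** transpose M) ** X)) *v a))
                   / (a \<bullet> ((transpose (W ** transpose M) ** (W ** transpose M)) *v a)))
       = (b \<bullet> ((- (transpose W ** X) ** adjugate (transpose M)) *v b))
           / (b \<bullet> ((transpose W ** W) *v b))"
proof -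
  have "transpose M *v a = b"
    by (simp add: a_def vector_matrix_mul_assoc matrix_inv_mul_matrix[OF assms(1)])
  then have frame_a: "(W ** transpose M) *v a = W *v b"
    by (simp add: matrix_vector_mul_assoc[symmetric])
  have adj_b: "adjugate (transpose M) *v b = det M *\<^sub>R a"
    by (simp add: adjugate_transpose_2[OF assms(1)] a_def scaleR_matrix_vector_assoc[symmetric])
  have "a \<bullet> ((- (transpose (W ** transpose M) ** X)) *v a) = - ((W *v b) \<bullet> (X *v a))"
    by (simp add: matrix_vector_mult_uminus_left inner_transpose_matrix_mul frame_a)
  moreover have "b \<bullet> ((- (transpose W ** X) ** adjugate (transpose M)) *v b)
      = - (det M * ((W *v b) \<bullet> (X *v a)))"
  proof -
    have "(- (transpose W ** X) ** adjugate (transpose M)) *v b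
        = - ((transpose W ** X) *v (det M *\<^sub>R a))"
      by (simp only: matrix_mul_uminus_left matrix_vector_mult_uminus_left
          matrix_vector_mul_assoc[symmetric] adj_b)
    then show ?thesis
      by (simp only: inner_minus_right matrix_vector_mult_scaleR inner_scaleR_right
          inner_transpose_matrix_mul)
  qed
  moreover have "a \<bullet> ((transpose (W ** transpose M) ** (W ** transpose M)) *v a)
      = b \<bullet> ((transpose W ** W) *v b)"
    by (simp add: inner_transpose_matrix_mul frame_a)
  ultimately show ?thesis
    by simp
qed

theorem proposition4p2:
  fixes U :: "(real^2) set" and x \<xi> :: "real^2 \<Rightarrow> real^3"
    and \<Omega> :: "real^2 \<Rightarrow> real^2^3" and \<Delta> :: "real^2 \<Rightarrow> real^2^2"
    and q b :: "real^2"
  assumes "open U"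
    and "smooth_on U x"
    and "frontal U \<xi>" and "\<forall>u\<in>U. \<xi> u \<in> sphere 0 1"
    and "tangent_moving_basis U \<xi> \<Omega>"
    and "smooth_on U \<Delta>"
    and "\<forall>u\<in>U. Dmat \<xi> u = \<Omega> u ** transpose (\<Delta> u)"
    and "q \<in> U - Sigma_set U \<xi>"
    and "b \<noteq> 0"
  shows "det (\<Delta> q) * kummer_curv x \<xi> q (b v* matrix_inv (\<Delta> q)) = kummer_curv_Omega x \<Omega> \<Delta> q b"
proof -
  have "q \<in> U" and regular: "inj ((*v) (Dmat \<xi> q))"
    using assms(8) unfolding Sigma_set_def by auto
  then have factor: "Dmat \<xi> q = \<Omega> q ** transpose (\<Delta> q)"
    using assms(7) by blast
  have "invertible (\<Delta> q)"
    using invertible_if_inj_matrix_mul[of "\<Omega> q" "transpose (\<Delta> q)"] regular factor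
      transpose_invertible transpose_transpose by metis
  from kummer_quotients_change_of_frame[OF this, where W = "\<Omega> q" and X = "Dmat x q" and b = b]
  show ?thesis
    unfolding kummer_curv_def kummer_curv_Omega_def kummer_I_def kummer_II_def
      kummer_I_Omega_def kummer_II_Omega_def factor .
qed

end
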